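(* Let $q\ge2$ and let $U$ be a $q\times q$ row-stochastic matrix with strictly positive entries. There is a constant $C_4$ independent of $n$ such that for all sufficiently large $n$: (i) if $\mathbf{t}_1,\mathbf{t}_2\in\mathcal{N}_{q,n}$ satisfy $\mathbf{t}_1=\mathbf{t}_2+\mathbf{e}_b-\mathbf{e}_a$ for some $a\ne b\in[1:q]$, then $d_{\mathrm{TV}}(W_{\mathbf{t}_1},W_{\mathbf{t}_2})\le\frac{C_4(\log n)^{(q-2)/2}}{\sqrt n}$; (ii) for any $\mathbf{t}_1,\mathbf{t}_2\in\mathcal{N}_{q,n}$, $d_{\mathrm{TV}}(W_{\mathbf{t}_1},W_{\mathbf{t}_2})\le\frac{C_4(\log n)^{(q-2)/2}}{\sqrt n}\,d_{\mathrm c}(\mathbf{t}_1,\mathbf{t}_2)$.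
   Context: $\mathcal{N}_{q,n}=\{\mathbf{t}\in\mathbb{Z}_{\ge0}^q:\sum t_i=n\}$ is the set of compositions of vectors in $[1:q]^n$ (composition of $\mathbf{x}$: $(N(1|\mathbf{x}),\dots,N(q|\mathbf{x}))$, $N(c|\mathbf{x})=|\{i:x_i=c\}|$). For $\mathbf{t}\in\mathcal{N}_{q,n}$, $W_{\mathbf{t}}$ is the distribution of the composition of the output of $n$ independent uses of the DMC $U$ when the input is any vector of composition $\mathbf{t}$ (the output distribution of the $q$-ary noisy composition channel for input point mass at $\mathbf{t}$). $\mathbf{e}_c$ is the $c$-th unit vector. $d_{\mathrm c}(\mathbf{t},\mathbf{t}')=\frac12\sum_i|t_i-t_i'|$; $d_{\mathrm{TV}}(P,Q)=\frac12\sum|P-Q|$. Logarithms base 2. *)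

theory Defs
  imports "HOL-Analysis.Analysis"
begin

text \<open>Alphabet is {0..<q} (standing for [1:q]); vectors of length n are
extensional functions from {..<n} to {..<q}; compositions are functions nat \<Rightarrow> nat
vanishing outside {..<q}.\<close>

definition vecs :: "nat \<Rightarrow> nat \<Rightarrow> (nat \<Rightarrow> nat) set" where
  "vecs q n = {..<n} \<rightarrow>\<^sub>E {..<q}"

definition comp :: "nat \<Rightarrow> (nat \<Rightarrow> nat) \<Rightarrow> nat \<Rightarrow> nat" where
  "comp n x = (\<lambda>c. card {i \<in> {..<n}. x i = c})"

definition comps :: "nat \<Rightarrow> nat \<Rightarrow> (nat \<Rightarrow> nat) set" where
  "comps q n = {t. (\<forall>i\<ge>q. t i = 0) \<and> (\<Sum>i<q. t i) = n}"

text \<open>Output composition distribution when the input is (some) vector of composition t.\<close>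
definition W :: "(nat \<Rightarrow> nat \<Rightarrow> real) \<Rightarrow> nat \<Rightarrow> nat \<Rightarrow> (nat \<Rightarrow> nat) \<Rightarrow> (nat \<Rightarrow> nat) \<Rightarrow> real" where
  "W U q n t s = (let x = (SOME x. x \<in> vecs q n \<and> comp n x = t) in
     (\<Sum>y \<in> {y \<in> vecs q n. comp n y = s}. \<Prod>i<n. U (x i) (y i)))"

definition dTV :: "nat \<Rightarrow> nat \<Rightarrow> ((nat \<Rightarrow> nat) \<Rightarrow> real) \<Rightarrow> ((nat \<Rightarrow> nat) \<Rightarrow> real) \<Rightarrow> real" where
  "dTV q n P Q = (1/2) * (\<Sum>s \<in> comps q n. \<bar>P s - Q s\<bar>)"

definition dc :: "nat \<Rightarrow> (nat \<Rightarrow> nat) \<Rightarrow> (nat \<Rightarrow> nat) \<Rightarrow> real" where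
  "dc q t t' = (1/2) * (\<Sum>i<q. \<bar>real (t i) - real (t' i)\<bar>)"

end

theory Submission
  imports Defs
begin

text \<open>
Write t1 = t2 + e_b - e_a and pick an input x of composition t2 with x j = a; then x(j := b)
has composition t1. Choose a letter l that occurs at least n / q times in x(j := l), and let I be
the set of its positions. With P = U^n(- | x(j := l)) and f = (U a - U b) / U l, the likelihoods
satisfy U^n(y | x) - U^n(y | x(j := b)) = P y * f (y j). Both P and the output composition are
invariant under permutations of I, so f (y j) may be replaced by its average over I. Under P the
values f (y i), i \<in> I, are independent and centred, hence by Cauchy-Schwarz the L1 distance of the
output compositions is at most sqrt (E f^2 / card I) = O(sqrt (q / n)). This proves (i) even
without the logarithmic factor; (ii) follows by the triangle inequality along a path of
dc t1 t2 unit moves.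
\<close>

lemma sum_abs_le_sqrt_sum_sq:
  fixes P g :: "'a \<Rightarrow> real"
  assumes "\<forall>y\<in>A. P y \<ge> 0" and "sum P A = 1"
  shows "(\<Sum>y\<in>A. P y * \<bar>g y\<bar>) \<le> sqrt (\<Sum>y\<in>A. P y * (g y)\<^sup>2)"
proof (rule real_le_rsqrt)
  have "(\<Sum>y\<in>A. P y * \<bar>g y\<bar>)\<^sup>2 = (\<Sum>y\<in>A. sqrt (P y) * (sqrt (P y) * \<bar>g y\<bar>))\<^sup>2"
    using assms(1) by (simp add: mult.assoc[symmetric])
  also have "\<dots> \<le> (\<Sum>y\<in>A. (sqrt (P y))\<^sup>2) * (\<Sum>y\<in>A. (sqrt (P y) * \<bar>g y\<bar>)\<^sup>2)"
    by (rule Cauchy_Schwarz_ineq_sum)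
  also have "\<dots> = (\<Sum>y\<in>A. P y * (g y)\<^sup>2)"
    using assms by (simp add: power_mult_distrib)
  finally show "(\<Sum>y\<in>A. P y * \<bar>g y\<bar>)\<^sup>2 \<le> (\<Sum>y\<in>A. P y * (g y)\<^sup>2)" .
qed

lemma sum_abs_sum_fibres_le:
  fixes h :: "'a \<Rightarrow> real"
  assumes "finite V"
  shows "(\<Sum>s\<in>T. \<bar>\<Sum>y\<in>{y\<in>V. k y = s}. h y\<bar>) \<le> (\<Sum>y\<in>V. \<bar>h y\<bar>)"
proof (cases "finite T")
  case True
  have "(\<Sum>s\<in>T. \<bar>\<Sum>y\<in>{y\<in>V. k y = s}. h y\<bar>) \<le> (\<Sum>s\<in>T. \<Sum>y\<in>{y\<in>V. k y = s}. \<bar>h y\<bar>)"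
    by (intro sum_mono sum_abs)
  also have "\<dots> = (\<Sum>y\<in>V. \<Sum>s\<in>T. if k y = s then \<bar>h y\<bar> else 0)"
    using assms by (simp add: sum.inter_filter sum.swap[of _ T])
  also have "\<dots> \<le> (\<Sum>y\<in>V. \<bar>h y\<bar>)"
    using True by (intro sum_mono) auto
  finally show ?thesis .
qed (simp add: sum_nonneg)

lemma ex_ge_average:
  fixes t :: "nat \<Rightarrow> nat"
  assumes "q > 0"
  shows "\<exists>l<q. (\<Sum>i<q. t i) \<le> q * t l"
proof (rule ccontr)
  assume "\<not> ?thesis"
  then have "(\<Sum>i<q. q * t i) < (\<Sum>i<q. \<Sum>k<q. t k)"
    using assms by (intro sum_strict_mono) auto
  then show False by (simp add: sum_distrib_left[symmetric])
qed

lemma half_sqrt_div_le_log_powr: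
  fixes C :: real and n q :: nat
  assumes "0 \<le> C" and "2 \<le> n" and "2 \<le> q"
  shows "sqrt (C / n) / 2 \<le> sqrt C * (log 2 n) powr ((real q - 2) / 2) / sqrt n"
proof -
  have "1 \<le> log 2 (real n)" using assms(2) by simp
  then have "1 \<le> (log 2 n) powr ((real q - 2) / 2)"
    using assms(3) by (intro ge_one_powr_ge_zero) auto
  then have "sqrt C \<le> sqrt C * (log 2 n) powr ((real q - 2) / 2)"
    using mult_left_mono[of 1 _ "sqrt C"] assms(1) by simp
  have "sqrt (C / n) / 2 \<le> sqrt C / sqrt n"
    using assms(1,2) by (simp add: real_sqrt_divide frac_le)
  also have "\<dots> \<le> sqrt C * (log 2 n) powr ((real q - 2) / 2) / sqrt n"
    using \<open>sqrt C \<le> _\<close> by (simp add: divide_right_mono)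
  finally show ?thesis .
qed

section \<open>Product channels and composition classes\<close>

definition chan_prob :: "(nat \<Rightarrow> nat \<Rightarrow> real) \<Rightarrow> nat \<Rightarrow> (nat \<Rightarrow> nat) \<Rightarrow> (nat \<Rightarrow> nat) \<Rightarrow> real" where
  "chan_prob U n x y = (\<Prod>i<n. U (x i) (y i))"

definition comp_class :: "nat \<Rightarrow> nat \<Rightarrow> (nat \<Rightarrow> nat) \<Rightarrow> (nat \<Rightarrow> nat) set" where
  "comp_class q n s = {y \<in> vecs q n. comp n y = s}"

definition W_vec :: "(nat \<Rightarrow> nat \<Rightarrow> real) \<Rightarrow> nat \<Rightarrow> nat \<Rightarrow> (nat \<Rightarrow> nat) \<Rightarrow> (nat \<Rightarrow> nat) \<Rightarrow> real" where
  "W_vec U q n x s = (\<Sum>y\<in>comp_class q n s. chan_prob U n x y)"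

lemma finite_vecs: "finite (vecs q n)"
  unfolding vecs_def by (rule finite_PiE) auto

lemma finite_comp_class: "finite (comp_class q n s)"
  unfolding comp_class_def using finite_vecs by simp

lemma vecs_less: "y \<in> vecs q n \<Longrightarrow> i < n \<Longrightarrow> y i < q"
  unfolding vecs_def by (auto simp: PiE_iff)

lemma fun_upd_in_vecs: "x \<in> vecs q n \<Longrightarrow> j < n \<Longrightarrow> c < q \<Longrightarrow> x(j := c) \<in> vecs q n"
  unfolding vecs_def by (auto simp: PiE_iff extensional_def)

lemma sum_vecs_prod:
  "(\<Sum>y\<in>vecs q n. \<Prod>i<n. F i (y i)) = (\<Prod>i<n. \<Sum>d<q. F i d :: real)"
  unfolding vecs_def by (rule prod_sum_PiE[symmetric]) auto

lemma comp_restrict_perm: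
  assumes "bij_betw \<sigma> {..<n} {..<n}"
  shows "comp n (restrict (y \<circ> \<sigma>) {..<n}) = comp n y"
proof
  fix c
  have "{i\<in>{..<n}. restrict (y \<circ> \<sigma>) {..<n} i = c} = {i\<in>{..<n}. y (\<sigma> i) = c}"
    by auto
  moreover have "bij_betw \<sigma> {i\<in>{..<n}. y (\<sigma> i) = c} {k\<in>{..<n}. y k = c}"
    using assms by (auto simp: bij_betw_def inj_on_def image_iff)
  ultimately show "comp n (restrict (y \<circ> \<sigma>) {..<n}) c = comp n y c"
    unfolding comp_def by (simp add: bij_betw_same_card)
qed

lemma sum_comp_class_perm:
  assumes "bij_betw \<sigma> {..<n} {..<n}"
  shows "(\<Sum>y\<in>comp_class q n s. G (restrict (y \<circ> \<sigma>) {..<n})) = (\<Sum>y\<in>comp_class q n s. G y)"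
proof -
  define \<phi> where "\<phi> = (\<lambda>y::nat\<Rightarrow>nat. restrict (y \<circ> \<sigma>) {..<n})"
  have "\<sigma> i < n" if "i < n" for i
    using assms that by (auto dest: bij_betwE)
  then have into: "\<phi> ` comp_class q n s \<subseteq> comp_class q n s"
    using comp_restrict_perm[OF assms] by (auto simp: \<phi>_def comp_class_def vecs_def PiE_iff)
  have "inj_on \<phi> (comp_class q n s)"
  proof (rule inj_onI)
    fix y y' assume y: "y \<in> comp_class q n s" "y' \<in> comp_class q n s" and eq: "\<phi> y = \<phi> y'"
    show "y = y'"
    proof (rule extensionalityI[of _ "{..<n}"])
      show "y \<in> extensional {..<n}" "y' \<in> extensional {..<n}"
        using y by (auto simp: comp_class_def vecs_def PiE_iff)
    next
      fix k assume "k \<in> {..<n}"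
      then obtain i where "i < n" "k = \<sigma> i"
        using bij_betw_imp_surj_on[OF assms] by blast
      then show "y k = y' k" using fun_cong[OF eq, of i] by (simp add: \<phi>_def)
    qed
  qed
  with into have "bij_betw \<phi> (comp_class q n s) (comp_class q n s)"
    by (simp add: bij_betw_def card_subset_eq card_image finite_comp_class)
  then show ?thesis unfolding \<phi>_def by (rule sum.reindex_bij_betw)
qed

lemma chan_prob_perm:
  assumes "bij_betw \<sigma> {..<n} {..<n}" and "\<And>i. i < n \<Longrightarrow> x' (\<sigma> i) = x i"
  shows "chan_prob U n x (restrict (y \<circ> \<sigma>) {..<n}) = chan_prob U n x' y"
proof -
  have "chan_prob U n x (restrict (y \<circ> \<sigma>) {..<n}) = (\<Prod>i<n. U (x' (\<sigma> i)) (y (\<sigma> i)))"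
    unfolding chan_prob_def using assms(2) by (intro prod.cong) auto
  also have "\<dots> = chan_prob U n x' y"
    unfolding chan_prob_def by (rule prod.reindex_bij_betw[OF assms(1)])
  finally show ?thesis .
qed

lemma comp_eq_imp_perm:
  assumes "comp n x = comp n x'"
  obtains \<sigma> where "bij_betw \<sigma> {..<n} {..<n}" and "\<And>i. i < n \<Longrightarrow> x' (\<sigma> i) = x i"
proof -
  define A where "A = (\<lambda>z :: nat \<Rightarrow> nat. \<lambda>c. {i\<in>{..<n}. z i = c})"
  have "card (A x c) = card (A x' c)" for c
    using assms unfolding A_def comp_def by metis
  then have "\<exists>h. bij_betw h (A x c) (A x' c)" for c
    by (intro finite_same_card_bij) (auto simp: A_def)
  then obtain h where h: "\<And>c. bij_betw (h c) (A x c) (A x' c)" by metis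
  define \<sigma> where "\<sigma> = (\<lambda>i. h (x i) i)"
  have "bij_betw \<sigma> (\<Union>c. A x c) (\<Union>c. A x' c)"
  proof (rule bij_betw_UNION_disjoint)
    show "bij_betw \<sigma> (A x c) (A x' c)" for c
      using h[of c] by (rule bij_betw_cong[THEN iffD1, rotated]) (auto simp: \<sigma>_def A_def)
  qed (auto simp: A_def disjoint_family_on_def)
  moreover have "(\<Union>c. A z c) = {..<n}" for z by (auto simp: A_def)
  ultimately have bij: "bij_betw \<sigma> {..<n} {..<n}" by simp
  have "x' (\<sigma> i) = x i" if "i < n" for i
    using that bij_betwE[OF h[of "x i"]] by (auto simp: \<sigma>_def A_def)
  with bij show ?thesis by (rule that)
qed

lemma W_vec_eq_if_comp_eq:
  assumes "comp n x = comp n x'"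
  shows "W_vec U q n x' = W_vec U q n x"
proof
  fix s
  obtain \<sigma> where \<sigma>: "bij_betw \<sigma> {..<n} {..<n}" "\<And>i. i < n \<Longrightarrow> x' (\<sigma> i) = x i"
    using comp_eq_imp_perm[OF assms] by blast
  have "W_vec U q n x' s = (\<Sum>y\<in>comp_class q n s. chan_prob U n x (restrict (y \<circ> \<sigma>) {..<n}))"
    unfolding W_vec_def using chan_prob_perm[of \<sigma> n x' x U] \<sigma> by simp
  also have "\<dots> = W_vec U q n x s"
    unfolding W_vec_def by (rule sum_comp_class_perm[OF \<sigma>(1)])
  finally show "W_vec U q n x' s = W_vec U q n x s" .
qed

lemma comp_fun_upd:
  assumes "j < n"
  shows "int (comp n (x(j := b)) c) = int (comp n x c) + (if c = b then 1 else 0) - (if c = x j then 1 else 0)"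
proof -
  define S where "S = {i\<in>{..<n}. x i = c}"
  have "finite S" and jS: "j \<in> S \<longleftrightarrow> c = x j" using assms by (auto simp: S_def)
  have "{i\<in>{..<n}. (x(j := b)) i = c} = (if c = b then insert j (S - {j}) else S - {j})"
    using assms by (auto simp: S_def)
  then have "card {i\<in>{..<n}. (x(j := b)) i = c} = card (S - {j}) + (if c = b then 1 else 0)"
    using \<open>finite S\<close> by (simp del: insert_Diff_single)
  moreover have "int (card (S - {j})) = int (card S) - (if c = x j then 1 else 0)"
    using \<open>finite S\<close> jS card_gt_0_iff[of S] by (cases "j \<in> S") (auto simp: of_nat_diff)
  ultimately show ?thesis
    unfolding comp_def S_def by simp
qed

lemma comps_imp_ex_vec:
  "t \<in> comps q n \<Longrightarrow> \<exists>x\<in>vecs q n. comp n x = t"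
proof (induction n arbitrary: t)
  case 0
  then have "t i = 0" for i
    by (cases "i < q") (auto simp: comps_def)
  then show ?case
    by (intro bexI[of _ "\<lambda>_. undefined"]) (auto simp: vecs_def comp_def fun_eq_iff)
next
  case (Suc n)
  then have t: "\<forall>i\<ge>q. t i = 0" "(\<Sum>i<q. t i) = Suc n" by (auto simp: comps_def)
  have "\<exists>c<q. t c \<noteq> 0"
  proof (rule ccontr)
    assume "\<not> ?thesis"
    then have "(\<Sum>i<q. t i) = 0" by simp
    with t(2) show False by simp
  qed
  then obtain c where c: "c < q" "t c > 0" by auto
  define t' where "t' = t(c := t c - 1)"
  have "(\<Sum>i<q. t' i) = t c - 1 + (\<Sum>i\<in>{..<q}-{c}. t i)"
    using c by (simp add: t'_def sum.remove)
  also have "\<dots> = n"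
    using c t(2) by (simp add: sum.remove)
  finally have "t' \<in> comps q n" using t c by (auto simp: comps_def t'_def)
  then obtain x' where x': "x' \<in> vecs q n" "comp n x' = t'" using Suc.IH by blast
  define x where "x = x'(n := c)"
  have "x \<in> vecs q (Suc n)"
    using x' c by (auto simp: x_def vecs_def PiE_iff extensional_def)
  moreover have "comp (Suc n) x = t"
  proof
    fix d
    have "{i\<in>{..<Suc n}. x i = d} = {i\<in>{..<n}. x' i = d} \<union> (if c = d then {n} else {})"
      unfolding x_def by auto
    then show "comp (Suc n) x d = t d"
      using x'(2) c unfolding comp_def t'_def by (auto simp: fun_eq_iff split: if_splits)
  qed
  ultimately show ?case by blast
qed

lemma W_eq_W_vec:
  assumes "x \<in> vecs q n" and "comp n x = t"
  shows "W U q n t = W_vec U q n x"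
proof -
  define x0 where "x0 = (SOME x. x \<in> vecs q n \<and> comp n x = t)"
  have "x0 \<in> vecs q n \<and> comp n x0 = t"
    unfolding x0_def using assms by (rule someI[of _ x, OF conjI])
  have "W U q n t = W_vec U q n x0"
    unfolding W_def W_vec_def comp_class_def chan_prob_def Let_def x0_def ..
  also have "\<dots> = W_vec U q n x"
    using W_vec_eq_if_comp_eq \<open>x0 \<in> vecs q n \<and> comp n x0 = t\<close> assms by metis
  finally show ?thesis .
qed

lemma chan_prob_nonneg:
  assumes "\<forall>a<q. \<forall>b<q. U a b \<ge> 0" and "x \<in> vecs q n" and "y \<in> vecs q n"
  shows "chan_prob U n x y \<ge> 0"
  unfolding chan_prob_def using assms vecs_less by (intro prod_nonneg) auto

lemma sum_chan_prob_mult_coords: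
  assumes row: "\<forall>a<q. (\<Sum>b<q. U a b) = 1" and x: "x \<in> vecs q n" and "i < n" "k < n"
  shows "(\<Sum>y\<in>vecs q n. chan_prob U n x y * h (y i) * h' (y k)) =
    (if i = k then (\<Sum>d<q. U (x i) d * h d * h' d)
     else (\<Sum>d<q. U (x i) d * h d) * (\<Sum>d<q. U (x k) d * h' d))" (is "_ = ?rhs")
proof -
  define F where "F = (\<lambda>m d. U (x m) d * (if m = i then h d else 1) * (if m = k then h' d else 1))"
  have "(\<Sum>y\<in>vecs q n. chan_prob U n x y * h (y i) * h' (y k)) = (\<Prod>m<n. \<Sum>d<q. F m d)"
    unfolding chan_prob_def F_def sum_vecs_prod[symmetric] using \<open>i < n\<close> \<open>k < n\<close>
    by (simp add: prod.distrib)
  also have "\<dots> = (\<Prod>m\<in>{i, k}. \<Sum>d<q. F m d)"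
    using row x vecs_less \<open>i < n\<close> \<open>k < n\<close> by (intro prod.mono_neutral_right) (auto simp: F_def)
  also have "\<dots> = ?rhs"
    by (auto simp: F_def)
  finally show ?thesis .
qed

lemma sum_chan_prob_eq_1:
  assumes "\<forall>a<q. (\<Sum>b<q. U a b) = 1" and "x \<in> vecs q n"
  shows "(\<Sum>y\<in>vecs q n. chan_prob U n x y) = 1"
  unfolding chan_prob_def sum_vecs_prod[of "\<lambda>i. U (x i)"] using assms vecs_less
  by (intro prod.neutral) auto

lemma sum_chan_prob_sum_sq:
  fixes U :: "nat \<Rightarrow> nat \<Rightarrow> real" and f :: "nat \<Rightarrow> real"
  assumes row: "\<forall>a<q. (\<Sum>b<q. U a b) = 1" and x: "x \<in> vecs q n"
    and I: "I \<subseteq> {..<n}" "\<forall>i\<in>I. x i = l" and mean: "(\<Sum>d<q. U l d * f d) = 0"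
  shows "(\<Sum>y\<in>vecs q n. chan_prob U n x y * (\<Sum>i\<in>I. f (y i))\<^sup>2) = card I * (\<Sum>d<q. U l d * (f d)\<^sup>2)"
proof -
  have "finite I" using I(1) finite_subset by blast
  have "(\<Sum>y\<in>vecs q n. chan_prob U n x y * (\<Sum>i\<in>I. f (y i))\<^sup>2)
      = (\<Sum>y\<in>vecs q n. \<Sum>i\<in>I. \<Sum>k\<in>I. chan_prob U n x y * f (y i) * f (y k))"
    by (simp only: power2_eq_square sum_product) (simp add: sum_distrib_left mult.assoc)
  also have "\<dots> = (\<Sum>i\<in>I. \<Sum>k\<in>I. \<Sum>y\<in>vecs q n. chan_prob U n x y * f (y i) * f (y k))"
    by (subst sum.swap) (simp add: sum.swap[of _ "vecs q n"])
  also have "\<dots> = (\<Sum>i\<in>I. \<Sum>k\<in>I. if i = k then (\<Sum>d<q. U l d * (f d)\<^sup>2) else 0)"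
  proof (intro sum.cong refl)
    fix i k assume "i \<in> I" "k \<in> I"
    with I have "i < n" "k < n" by auto
    with \<open>i \<in> I\<close> \<open>k \<in> I\<close> show "(\<Sum>y\<in>vecs q n. chan_prob U n x y * f (y i) * f (y k))
        = (if i = k then (\<Sum>d<q. U l d * (f d)\<^sup>2) else 0)"
      using sum_chan_prob_mult_coords[OF row x, of i k f f] I mean
      by (auto simp: power2_eq_square mult.assoc)
  qed
  also have "\<dots> = card I * (\<Sum>d<q. U l d * (f d)\<^sup>2)"
    using \<open>finite I\<close> by simp
  finally show ?thesis .
qed

lemma sum_comp_class_chan_prob_swap:
  assumes "i < n" "j < n" "x i = x j"
  shows "(\<Sum>y\<in>comp_class q n s. chan_prob U n x y * h (y i))
       = (\<Sum>y\<in>comp_class q n s. chan_prob U n x y * h (y j))"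
proof -
  define \<sigma> where "\<sigma> = (\<lambda>k::nat. if k = i then j else if k = j then i else k)"
  have \<sigma>: "bij_betw \<sigma> {..<n} {..<n}"
    by (rule bij_betw_byWitness[where f' = \<sigma>]) (use assms in \<open>auto simp: \<sigma>_def\<close>)
  have "x (\<sigma> k) = x k" for k using assms by (simp add: \<sigma>_def)
  then have "chan_prob U n x (restrict (y \<circ> \<sigma>) {..<n}) * h (restrict (y \<circ> \<sigma>) {..<n} j)
      = chan_prob U n x y * h (y i)" for y
    using chan_prob_perm[OF \<sigma>, of x x U y] assms by (simp add: \<sigma>_def)
  then have "(\<Sum>y\<in>comp_class q n s. chan_prob U n x y * h (y i))
      = (\<Sum>y\<in>comp_class q n s. chan_prob U n x (restrict (y \<circ> \<sigma>) {..<n}) * h (restrict (y \<circ> \<sigma>) {..<n} j))"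
    by simp
  also have "\<dots> = (\<Sum>y\<in>comp_class q n s. chan_prob U n x y * h (y j))"
    by (rule sum_comp_class_perm[OF \<sigma>])
  finally show ?thesis .
qed

section \<open>Changing one input letter\<close>

lemma chan_prob_fun_upd:
  assumes "j < n"
  shows "chan_prob U n (x(j := c)) y = U c (y j) * (\<Prod>i\<in>{..<n}-{j}. U (x i) (y i))"
proof -
  have "(\<Prod>i\<in>{..<n}-{j}. U ((x(j := c)) i) (y i)) = (\<Prod>i\<in>{..<n}-{j}. U (x i) (y i))"
    by (intro prod.cong) auto
  then show ?thesis
    unfolding chan_prob_def using assms by (simp add: prod.remove[of _ j])
qed

lemma sum_chan_prob_ratio_sum_sq:
  fixes U :: "nat \<Rightarrow> nat \<Rightarrow> real"
  assumes pos: "\<forall>a<q. \<forall>b<q. U a b > 0" and row: "\<forall>a<q. (\<Sum>b<q. U a b) = 1"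
    and x: "x \<in> vecs q n" and I: "I \<subseteq> {..<n}" "\<forall>i\<in>I. x i = l"
    and "a < q" "b < q" "l < q"
  shows "(\<Sum>y\<in>vecs q n. chan_prob U n x y * (\<Sum>i\<in>I. (U a (y i) - U b (y i)) / U l (y i))\<^sup>2)
    = card I * (\<Sum>d<q. (U a d - U b d)\<^sup>2 / U l d)"
proof -
  define f where "f = (\<lambda>d. (U a d - U b d) / U l d)"
  have Ul: "U l d \<noteq> 0" if "d < q" for d using pos \<open>l < q\<close> that by (metis less_irrefl)
  have "(\<Sum>d<q. U l d * f d) = (\<Sum>d<q. U a d - U b d)"
    using Ul by (intro sum.cong) (auto simp: f_def)
  also have "\<dots> = 0"
    using row \<open>a < q\<close> \<open>b < q\<close> by (simp add: sum_subtractf)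
  finally have "(\<Sum>d<q. U l d * f d) = 0" .
  moreover have "(\<Sum>d<q. U l d * (f d)\<^sup>2) = (\<Sum>d<q. (U a d - U b d)\<^sup>2 / U l d)"
    using Ul by (intro sum.cong) (auto simp: f_def power2_eq_square)
  ultimately show ?thesis
    using sum_chan_prob_sum_sq[OF row x I, of f] by (simp add: f_def)
qed

lemma card_mult_W_vec_fun_upd_diff:
  fixes U :: "nat \<Rightarrow> nat \<Rightarrow> real"
  assumes pos: "\<forall>d<q. U l d > 0" and x: "x \<in> vecs q n" and j: "j < n"
  defines "I \<equiv> {i\<in>{..<n}. (x(j := l)) i = l}"
  shows "card I * (W_vec U q n x s - W_vec U q n (x(j := b)) s)
    = (\<Sum>y\<in>comp_class q n s.
         chan_prob U n (x(j := l)) y * (\<Sum>i\<in>I. (U (x j) (y i) - U b (y i)) / U l (y i)))"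
proof -
  define P where "P = chan_prob U n (x(j := l))"
  define f where "f = (\<lambda>d. (U (x j) d - U b d) / U l d)"
  have "chan_prob U n x y - chan_prob U n (x(j := b)) y = P y * f (y j)" if "y \<in> vecs q n" for y
  proof -
    have "U l (y j) > 0" using pos vecs_less[OF that j] by blast
    then show ?thesis
      using chan_prob_fun_upd[OF j, of U x "x j" y] chan_prob_fun_upd[OF j, of U x b y]
        chan_prob_fun_upd[OF j, of U x l y]
      by (simp add: P_def f_def field_simps)
  qed
  then have "W_vec U q n x s - W_vec U q n (x(j := b)) s = (\<Sum>y\<in>comp_class q n s. P y * f (y j))"
    unfolding W_vec_def sum_subtractf[symmetric] by (auto simp: comp_class_def)
  then have "card I * (W_vec U q n x s - W_vec U q n (x(j := b)) s)
      = (\<Sum>i\<in>I. \<Sum>y\<in>comp_class q n s. P y * f (y j))"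
    by simp
  \<comment> \<open>P is invariant under swapping two positions of I, and so is the composition of y\<close>
  also have "\<dots> = (\<Sum>i\<in>I. \<Sum>y\<in>comp_class q n s. P y * f (y i))"
    using j unfolding P_def I_def
    by (intro sum.cong refl sum_comp_class_chan_prob_swap[symmetric]) auto
  also have "\<dots> = (\<Sum>y\<in>comp_class q n s. P y * (\<Sum>i\<in>I. f (y i)))"
    by (simp add: sum_distrib_left sum.swap[of _ I])
  finally show ?thesis by (simp add: P_def f_def)
qed

lemma sum_abs_W_vec_fun_upd_le:
  fixes U :: "nat \<Rightarrow> nat \<Rightarrow> real"
  assumes pos: "\<forall>a<q. \<forall>b<q. U a b > 0" and row: "\<forall>a<q. (\<Sum>b<q. U a b) = 1"
    and x: "x \<in> vecs q n" and j: "j < n" and "b < q" and "l < q"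
  defines "N \<equiv> card {i\<in>{..<n}. (x(j := l)) i = l}"
  shows "(\<Sum>s\<in>comps q n. \<bar>W_vec U q n (x(j := b)) s - W_vec U q n x s\<bar>)
    \<le> sqrt ((\<Sum>d<q. (U (x j) d - U b d)\<^sup>2 / U l d) / N)"
proof -
  define K where "K = (\<Sum>d<q. (U (x j) d - U b d)\<^sup>2 / U l d)"
  define P where "P = chan_prob U n (x(j := l))"
  define I where "I = {i\<in>{..<n}. (x(j := l)) i = l}"
  define g where "g = (\<lambda>y. \<Sum>i\<in>I. (U (x j) (y i) - U b (y i)) / U l (y i))"
  have xl: "x(j := l) \<in> vecs q n" using x j \<open>l < q\<close> by (rule fun_upd_in_vecs)
  have I: "I \<subseteq> {..<n}" "\<forall>i\<in>I. (x(j := l)) i = l" by (auto simp: I_def)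
  have "j \<in> I" "finite I" using j by (auto simp: I_def)
  then have N: "N = card I" "N > 0" by (auto simp: N_def I_def card_gt_0_iff)
  have "\<forall>a<q. \<forall>b<q. U a b \<ge> 0" using pos by (simp add: less_imp_le)
  then have P_nonneg: "\<forall>y\<in>vecs q n. P y \<ge> 0"
    using chan_prob_nonneg xl by (simp add: P_def)
  have "real N * (\<Sum>s\<in>comps q n. \<bar>W_vec U q n (x(j := b)) s - W_vec U q n x s\<bar>)
      = (\<Sum>s\<in>comps q n. \<bar>real N * (W_vec U q n x s - W_vec U q n (x(j := b)) s)\<bar>)"
    by (simp add: sum_distrib_left abs_mult abs_minus_commute)
  also have "\<dots> = (\<Sum>s\<in>comps q n. \<bar>\<Sum>y\<in>comp_class q n s. P y * g y\<bar>)"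
    using card_mult_W_vec_fun_upd_diff[OF _ x j, where U = U and l = l and b = b] pos \<open>l < q\<close>
    by (simp add: N(1) I_def P_def g_def)
  also have "\<dots> \<le> (\<Sum>y\<in>vecs q n. \<bar>P y * g y\<bar>)"
    unfolding comp_class_def by (rule sum_abs_sum_fibres_le[OF finite_vecs])
  also have "\<dots> = (\<Sum>y\<in>vecs q n. P y * \<bar>g y\<bar>)"
    using P_nonneg by (intro sum.cong) (auto simp: abs_mult)
  also have "\<dots> \<le> sqrt (\<Sum>y\<in>vecs q n. P y * (g y)\<^sup>2)"
    using P_nonneg sum_chan_prob_eq_1[OF row xl]
    by (intro sum_abs_le_sqrt_sum_sq) (auto simp: P_def)
  also have "(\<Sum>y\<in>vecs q n. P y * (g y)\<^sup>2) = N * K"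
    unfolding P_def g_def N(1) K_def
    by (rule sum_chan_prob_ratio_sum_sq[OF pos row xl I vecs_less[OF x j] \<open>b < q\<close> \<open>l < q\<close>])
  finally have "real N * (\<Sum>s\<in>comps q n. \<bar>W_vec U q n (x(j := b)) s - W_vec U q n x s\<bar>)
      \<le> sqrt (N * K)" .
  moreover have "sqrt (N * K) = N * sqrt (K / N)"
    using N(2) by (simp add: real_sqrt_mult real_sqrt_divide field_simps)
  ultimately show ?thesis
    using N(2) unfolding K_def by (simp add: mult_le_cancel_left_pos)
qed

definition unit_shift :: "nat \<Rightarrow> nat \<Rightarrow> (nat \<Rightarrow> nat) \<Rightarrow> (nat \<Rightarrow> nat) \<Rightarrow> bool" where
  "unit_shift a b t1 t2 \<longleftrightarrow> a \<noteq> b \<and>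
    (\<forall>i. int (t1 i) = int (t2 i) + (if i = b then 1 else 0) - (if i = a then 1 else 0))"

lemma unit_shift_fun_upd:
  assumes "comp n x = t2" and "unit_shift a b t1 t2"
  obtains j where "j < n" "x j = a" "comp n (x(j := b)) = t1"
proof -
  have "int (t1 a) = int (t2 a) - 1" using assms(2) by (simp add: unit_shift_def)
  then have "t2 a > 0" by linarith
  then have "{i\<in>{..<n}. x i = a} \<noteq> {}"
    using assms(1) unfolding comp_def by (metis card.empty less_irrefl)
  then obtain j where j: "j < n" "x j = a" by blast
  have "comp n (x(j := b)) = t1"
  proof
    fix c
    have "int (comp n (x(j := b)) c) = int (t1 c)"
      using comp_fun_upd[OF j(1), of x b c] assms j(2) by (simp add: unit_shift_def)
    then show "comp n (x(j := b)) c = t1 c" by simp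
  qed
  with j show ?thesis by (rule that)
qed

lemma sum_sq_diff_div_le_sum_inv:
  fixes U :: "nat \<Rightarrow> nat \<Rightarrow> real"
  assumes pos: "\<forall>a<q. \<forall>b<q. U a b > 0" and row: "\<forall>a<q. (\<Sum>b<q. U a b) = 1"
    and "a < q" "b < q" "l < q"
  shows "(\<Sum>d<q. (U a d - U b d)\<^sup>2 / U l d) \<le> (\<Sum>l<q. \<Sum>d<q. 1 / U l d)"
proof -
  have U_le_1: "U c d \<le> 1" if "c < q" "d < q" for c d
    using row pos that member_le_sum[of d "{..<q}" "U c"] by (auto simp: less_imp_le)
  have "\<bar>U a d - U b d\<bar> \<le> 1" if "d < q" for d
  proof -
    have "0 < U a d" "0 < U b d" using pos that \<open>a < q\<close> \<open>b < q\<close> by auto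
    with U_le_1[of a d] U_le_1[of b d] that \<open>a < q\<close> \<open>b < q\<close> show ?thesis by linarith
  qed
  then have "(U a d - U b d)\<^sup>2 / U l d \<le> 1 / U l d" if "d < q" for d
    using pos that \<open>l < q\<close> by (intro divide_right_mono) (auto simp: abs_square_le_1 less_imp_le)
  then have "(\<Sum>d<q. (U a d - U b d)\<^sup>2 / U l d) \<le> (\<Sum>d<q. 1 / U l d)"
    by (intro sum_mono) auto
  also have "\<dots> \<le> (\<Sum>l<q. \<Sum>d<q. 1 / U l d)"
    using pos \<open>l < q\<close>
    by (intro member_le_sum[of l "{..<q}" "\<lambda>l. \<Sum>d<q. 1 / U l d"]) (auto intro!: sum_nonneg simp: less_imp_le)
  finally show ?thesis .
qed

lemma dTV_W_unit_shift_le: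
  fixes U :: "nat \<Rightarrow> nat \<Rightarrow> real"
  assumes pos: "\<forall>a<q. \<forall>b<q. U a b > 0" and row: "\<forall>a<q. (\<Sum>b<q. U a b) = 1"
    and "n > 0" and t1: "t1 \<in> comps q n" and t2: "t2 \<in> comps q n" and "a < q" "b < q"
    and shift: "unit_shift a b t1 t2"
  shows "dTV q n (W U q n t1) (W U q n t2) \<le> sqrt (q * (\<Sum>l<q. \<Sum>d<q. 1 / U l d) / n) / 2"
proof -
  define K0 where "K0 = (\<Sum>l<q. \<Sum>d<q. 1 / U l d)"
  obtain x where x: "x \<in> vecs q n" "comp n x = t2" using comps_imp_ex_vec[OF t2] by blast
  obtain j where j: "j < n" "x j = a" "comp n (x(j := b)) = t1"
    using unit_shift_fun_upd[OF x(2) shift] by blast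
  then have W: "W U q n t1 = W_vec U q n (x(j := b))" "W U q n t2 = W_vec U q n x"
    using W_eq_W_vec fun_upd_in_vecs x \<open>b < q\<close> by blast+
  obtain l where l: "l < q" "n \<le> q * t2 l"
    using ex_ge_average[of q t2] \<open>a < q\<close> t2 by (auto simp: comps_def)
  define N where "N = card {i\<in>{..<n}. (x(j := l)) i = l}"
  have "t2 l \<le> N"
    unfolding N_def x(2)[symmetric] comp_def by (intro card_mono) auto
  with l have qN: "real n \<le> q * real N"
    by (metis le_trans mult_le_mono2 of_nat_le_iff of_nat_mult)
  have "0 \<le> K0"
    unfolding K0_def using pos by (auto intro!: sum_nonneg simp: less_imp_le)
  have "(\<Sum>d<q. (U a d - U b d)\<^sup>2 / U l d) / N \<le> K0 / N"
    unfolding K0_def using sum_sq_diff_div_le_sum_inv[OF pos row \<open>a < q\<close> \<open>b < q\<close> \<open>l < q\<close>]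
    by (simp add: divide_right_mono)
  also have "\<dots> = q * K0 / (q * N)"
    using \<open>a < q\<close> by simp
  also have "\<dots> \<le> q * K0 / n"
    using qN \<open>n > 0\<close> \<open>0 \<le> K0\<close> by (intro divide_left_mono) auto
  finally have "(\<Sum>s\<in>comps q n. \<bar>W_vec U q n (x(j := b)) s - W_vec U q n x s\<bar>) \<le> sqrt (q * K0 / n)"
    using sum_abs_W_vec_fun_upd_le[OF pos row x(1) j(1) \<open>b < q\<close> \<open>l < q\<close>] j(2)
    unfolding N_def by (meson order_trans real_sqrt_le_mono)
  then show ?thesis
    unfolding dTV_def W K0_def by simp
qed

section \<open>Paths of unit moves\<close>

lemma dTV_triangle: "dTV q n P R \<le> dTV q n P Q + dTV q n Q R"
proof -
  have "(\<Sum>s\<in>comps q n. \<bar>P s - R s\<bar>) \<le> (\<Sum>s\<in>comps q n. \<bar>P s - Q s\<bar> + \<bar>Q s - R s\<bar>)"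
    by (intro sum_mono) linarith
  then show ?thesis unfolding dTV_def by (simp add: sum.distrib)
qed

lemma dc_nonneg: "dc q t t' \<ge> 0"
  unfolding dc_def by (simp add: sum_nonneg)

lemma comps_ne_imp_ex_less:
  assumes "t1 \<in> comps q n" "t2 \<in> comps q n" "t1 \<noteq> t2"
  shows "\<exists>a<q. t1 a < t2 a"
proof (rule ccontr)
  assume "\<not> ?thesis"
  then have le: "\<forall>i\<in>{..<q}. t2 i \<le> t1 i" by auto
  have "\<exists>i<q. t1 i \<noteq> t2 i"
  proof (rule ccontr)
    assume "\<not> ?thesis"
    then have "t1 i = t2 i" for i using assms(1,2) by (cases "i < q") (auto simp: comps_def)
    with assms(3) show False by auto
  qed
  with le obtain i where "i < q" "t2 i < t1 i" by (auto simp: le_neq_implies_less)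
  with le have "(\<Sum>i<q. t2 i) < (\<Sum>i<q. t1 i)"
    by (intro sum_strict_mono_ex1) auto
  with assms(1,2) show False by (simp add: comps_def)
qed

lemma comps_unit_step:
  assumes t1: "t1 \<in> comps q n" and t2: "t2 \<in> comps q n" and "t1 \<noteq> t2"
  obtains a b t where "a < q" "b < q" "t \<in> comps q n" "unit_shift a b t t2"
    and "dc q t1 t = dc q t1 t2 - 1"
proof -
  obtain a where a: "a < q" "t1 a < t2 a" using comps_ne_imp_ex_less[OF t1 t2 \<open>t1 \<noteq> t2\<close>] by blast
  obtain b where b: "b < q" "t2 b < t1 b" using comps_ne_imp_ex_less[OF t2 t1] \<open>t1 \<noteq> t2\<close> by metis
  define t where "t = t2(a := t2 a - 1, b := t2 b + 1)"
  have "a \<noteq> b" using a b by auto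
  have t_int: "int (t i) = int (t2 i) + (if i = b then 1 else 0) - (if i = a then 1 else 0)" for i
    using a \<open>a \<noteq> b\<close> by (auto simp: t_def)
  then have "int (\<Sum>i<q. t i) = int (\<Sum>i<q. t2 i)"
    using a b by (simp add: of_nat_sum sum.distrib sum_subtractf)
  then have "(\<Sum>i<q. t i) = (\<Sum>i<q. t2 i)" by (simp only: of_nat_eq_iff)
  then have "t \<in> comps q n"
    using t2 a b by (auto simp: comps_def t_def)
  moreover have "(\<Sum>i<q. \<bar>real (t1 i) - real (t i)\<bar>) = (\<Sum>i<q. \<bar>real (t1 i) - real (t2 i)\<bar>) - 2"
  proof -
    have "\<bar>real (t1 i) - real (t i)\<bar>
        = \<bar>real (t1 i) - real (t2 i)\<bar> - (if i = a then 1 else 0) - (if i = b then 1 else 0)" for i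
      using a b \<open>a \<noteq> b\<close> by (auto simp: t_def of_nat_diff)
    then show ?thesis
      using a b \<open>a \<noteq> b\<close> by (simp add: sum.distrib sum_subtractf)
  qed
  then have "dc q t1 t = dc q t1 t2 - 1" by (simp add: dc_def)
  ultimately show ?thesis
    using that a(1) b(1) t_int \<open>a \<noteq> b\<close> by (auto simp: unit_shift_def)
qed

lemma dTV_le_dc_mult:
  fixes V :: "(nat \<Rightarrow> nat) \<Rightarrow> (nat \<Rightarrow> nat) \<Rightarrow> real"
  assumes "B \<ge> 0"
    and shift: "\<And>t t' a b. t \<in> comps q n \<Longrightarrow> t' \<in> comps q n \<Longrightarrow> a < q \<Longrightarrow> b < q \<Longrightarrow>
      unit_shift a b t t' \<Longrightarrow> dTV q n (V t) (V t') \<le> B"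
    and t1: "t1 \<in> comps q n" and t2: "t2 \<in> comps q n"
  shows "dTV q n (V t1) (V t2) \<le> B * dc q t1 t2"
proof -
  obtain k :: nat where "dc q t1 t2 \<le> k" using real_arch_simple by blast
  with t2 show ?thesis
  proof (induction k arbitrary: t2)
    case 0
    \<comment> \<open>distinct compositions are at distance at least 1, since a step lowers dc by 1\<close>
    have "t1 = t2"
    proof (rule ccontr)
      assume "t1 \<noteq> t2"
      then obtain t where "dc q t1 t = dc q t1 t2 - 1"
        using comps_unit_step[OF t1 0(1)] by metis
      with 0(2) show False using dc_nonneg[of q t1 t] by simp
    qed
    then show ?case by (simp add: dTV_def dc_def)
  next
    case (Suc k)
    show ?case
    proof (cases "t1 = t2")
      case True
      then show ?thesis by (simp add: dTV_def dc_def)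
    next
      case False
      then obtain a b t where ab: "a < q" "b < q" and t: "t \<in> comps q n" "unit_shift a b t t2"
        and dc: "dc q t1 t = dc q t1 t2 - 1"
        using comps_unit_step[OF t1 Suc(2)] by metis
      have "dTV q n (V t1) (V t2) \<le> dTV q n (V t1) (V t) + dTV q n (V t) (V t2)"
        by (rule dTV_triangle)
      also have "\<dots> \<le> B * dc q t1 t + B"
        using Suc.IH[OF t(1)] Suc(3) dc shift[OF t(1) Suc(2) ab t(2)] by (intro add_mono) auto
      also have "\<dots> = B * dc q t1 t2"
        by (simp add: dc algebra_simps)
      finally show ?thesis .
    qed
  qed
qed

lemma dTV_W_le_log_bound:
  fixes U :: "nat \<Rightarrow> nat \<Rightarrow> real"
  assumes "q \<ge> 2" and pos: "\<forall>a<q. \<forall>b<q. U a b > 0" and row: "\<forall>a<q. (\<Sum>b<q. U a b) = 1"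
    and "2 \<le> n"
  defines "B \<equiv> sqrt (q * (\<Sum>l<q. \<Sum>d<q. 1 / U l d)) * (log 2 n) powr ((real q - 2) / 2) / sqrt n"
  shows "\<And>t1 t2 a b. t1 \<in> comps q n \<Longrightarrow> t2 \<in> comps q n \<Longrightarrow> a < q \<Longrightarrow> b < q \<Longrightarrow>
      unit_shift a b t1 t2 \<Longrightarrow> dTV q n (W U q n t1) (W U q n t2) \<le> B"
    and "\<And>t1 t2. t1 \<in> comps q n \<Longrightarrow> t2 \<in> comps q n \<Longrightarrow>
      dTV q n (W U q n t1) (W U q n t2) \<le> B * dc q t1 t2"
proof -
  have C: "0 \<le> q * (\<Sum>l<q. \<Sum>d<q. 1 / U l d)"
    using pos by (auto intro!: mult_nonneg_nonneg sum_nonneg simp: less_imp_le)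
  then have "sqrt (q * (\<Sum>l<q. \<Sum>d<q. 1 / U l d) / n) / 2 \<le> B"
    unfolding B_def using half_sqrt_div_le_log_powr[OF _ \<open>2 \<le> n\<close> assms(1)] by blast
  then show adjacent: "dTV q n (W U q n t1) (W U q n t2) \<le> B"
    if "t1 \<in> comps q n" "t2 \<in> comps q n" "a < q" "b < q" "unit_shift a b t1 t2" for t1 t2 a b
    using dTV_W_unit_shift_le[OF pos row _ that] \<open>2 \<le> n\<close> by simp
  have "0 \<le> B" using C by (simp add: B_def)
  then show "\<And>t1 t2. t1 \<in> comps q n \<Longrightarrow> t2 \<in> comps q n \<Longrightarrow>
      dTV q n (W U q n t1) (W U q n t2) \<le> B * dc q t1 t2"
    by (rule dTV_le_dc_mult[OF _ adjacent])
qed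

theorem lemma11:
  fixes q :: nat and U :: "nat \<Rightarrow> nat \<Rightarrow> real"
  assumes "q \<ge> 2"
    and "\<forall>a<q. \<forall>b<q. U a b > 0"
    and "\<forall>a<q. (\<Sum>b<q. U a b) = 1"
  shows "\<exists>C4::real. \<forall>\<^sub>F n in sequentially.
    (\<forall>t1\<in>comps q n. \<forall>t2\<in>comps q n. \<forall>a<q. \<forall>b<q.
        a \<noteq> b \<and> (\<forall>i. int (t1 i) = int (t2 i) + (if i = b then 1 else 0) - (if i = a then 1 else 0))
        \<longrightarrow> dTV q n (W U q n t1) (W U q n t2)
              \<le> C4 * (log 2 (real n)) powr ((real q - 2) / 2) / sqrt (real n)) \<and>
    (\<forall>t1\<in>comps q n. \<forall>t2\<in>comps q n.
        dTV q n (W U q n t1) (W U q n t2)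
          \<le> C4 * (log 2 (real n)) powr ((real q - 2) / 2) / sqrt (real n) * dc q t1 t2)"
proof -
  define C4 where "C4 = sqrt (q * (\<Sum>l<q. \<Sum>d<q. 1 / U l d))"
  show ?thesis
  proof (intro exI[of _ C4] eventually_sequentiallyI[of 2] conjI ballI allI impI)
    fix n t1 t2 a b assume n: "2 \<le> n" and t: "t1 \<in> comps q n" "t2 \<in> comps q n" "a < q" "b < q"
      and "a \<noteq> b \<and> (\<forall>i. int (t1 i) = int (t2 i) + (if i = b then 1 else 0) - (if i = a then 1 else 0))"
    then have "unit_shift a b t1 t2" by (simp add: unit_shift_def)
    from dTV_W_le_log_bound(1)[OF assms n t this]
    show "dTV q n (W U q n t1) (W U q n t2)
        \<le> C4 * (log 2 (real n)) powr ((real q - 2) / 2) / sqrt (real n)"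
      by (simp add: C4_def)
  next
    fix n t1 t2 assume "2 \<le> n" "t1 \<in> comps q n" "t2 \<in> comps q n"
    from dTV_W_le_log_bound(2)[OF assms this]
    show "dTV q n (W U q n t1) (W U q n t2)
        \<le> C4 * (log 2 (real n)) powr ((real q - 2) / 2) / sqrt (real n) * dc q t1 t2"
      by (simp add: C4_def)
  qed
qed

end
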